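(* Let $(a_n)_{n\ge1}$ be a sequence of real numbers with $\lim_{n\to\infty}a_n=\infty$, and let $\gamma>0$. Then there exists a sequence of positive integers $(r_n)_{n\ge0}$ such that $$\limsup_{n\to\infty}\frac{2^{n+1}a_n}{\sum_{i=1}^{n}2^i\,r_0r_1\cdots r_{i-1}}=\gamma.$$ Here the denominator is $2r_0+4r_0r_1+\dots+2^nr_0\cdots r_{n-1}$. *)

theory Defs
  imports "HOL-Analysis.Analysis"
begin

end

theory Submission
  imports Defs
begin

text \<open>
  Choose block ends \<open>0 = s 0 < s 1 < \<dots>\<close> at running maxima of \<open>a\<close> and make the partial
  product \<open>r 0 \<cdots> r (j - 1)\<close> constant, equal to \<open>Q (m + 1)\<close>, on the block \<open>s m < j \<le> s (m + 1)\<close>,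
  where \<open>Q (m + 1)\<close> is the least multiple of \<open>Q m\<close> with \<open>\<gamma> Q (m + 1) \<ge> a (s (m + 1))\<close>.
  As \<open>Q (m + 1)\<close> dwarfs the earlier values, the denominator at \<open>j\<close> in the block lies between
  \<open>(2^(j+1) - 2^(s m + 1)) Q (m + 1)\<close> and \<open>2^(j+1) Q (m + 1)\<close>. Hence the quotient is at most about
  \<open>\<gamma> a j / a (s (m + 1)) \<le> \<gamma>\<close>, and nearly \<open>\<gamma>\<close> at the block end, provided the rounding error
  \<open>Q m\<close> is small against \<open>a (s (m + 1)) / \<gamma>\<close>. The lower bound on the denominator is poor only
  for the first \<open>m + 1\<close> indices of the block, and there \<open>a j \<le> a (s (m + 1)) / 2\<close> is arranged.
\<close>

lemma sum_power2_greaterThanAtMost: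
  assumes "s \<le> j"
  shows "(\<Sum>i\<in>{s<..j}. (2::real) ^ i) = 2 ^ (j + 1) - 2 ^ (s + 1)"
  using assms
proof (induction j rule: dec_induct)
  case (step n)
  have "{s<..Suc n} = insert (Suc n) {s<..n}" using step.hyps by auto
  then show ?case using step.IH by simp
qed simp

lemma limsup_eq_of_bounds:
  fixes x u v :: "nat \<Rightarrow> real" and t :: "nat \<Rightarrow> nat"
  assumes "eventually (\<lambda>n. x n \<le> u n) sequentially" and "u \<longlonglongrightarrow> c"
    and "strict_mono t" and "\<And>m. v m \<le> x (t m)" and "v \<longlonglongrightarrow> c"
  shows "limsup (\<lambda>n. ereal (x n)) = ereal c"
proof (rule antisym)
  have "limsup (\<lambda>n. ereal (x n)) \<le> limsup (\<lambda>n. ereal (u n))"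
    using assms(1) by (intro Limsup_mono) simp
  also have "\<dots> = ereal c"
    using assms(2) by (intro lim_imp_Limsup) (simp_all add: lim_ereal)
  finally show "limsup (\<lambda>n. ereal (x n)) \<le> ereal c" .
next
  have "ereal c = limsup (\<lambda>m. ereal (v m))"
    using assms(5) by (intro lim_imp_Limsup[symmetric]) (simp_all add: lim_ereal)
  also have "\<dots> \<le> limsup ((\<lambda>n. ereal (x n)) \<circ> t)"
    using assms(4) by (intro Limsup_mono) simp
  also have "\<dots> \<le> limsup (\<lambda>n. ereal (x n))"
    using assms(3) by (rule limsup_subseq_mono)
  finally show "ereal c \<le> limsup (\<lambda>n. ereal (x n))" .
qed

lemma pow2_diff_lower_bound:
  fixes k m j :: nat
  assumes "k + m + 1 < j"
  shows "2 ^ (j + 1) * (real m + 1) \<le> (2 ^ (j + 1) - 2 ^ (k + 1)) * (real m + 2)"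
proof -
  have "real (m + 2) \<le> real (2 ^ (m + 2))"
    by (simp only: of_nat_le_iff) (rule less_imp_le[OF less_exp])
  also have "\<dots> = 2 ^ (m + 2)"
    by simp
  also have "\<dots> \<le> 2 ^ (j - k)"
    using assms by (intro power_increasing) auto
  finally have "2 ^ (k + 1) * (real m + 2) \<le> 2 ^ (k + 1) * 2 ^ (j - k)"
    by simp
  also have "\<dots> = 2 ^ (j + 1)"
    using assms by (simp flip: power_add)
  finally show ?thesis by (simp add: algebra_simps)
qed

lemma running_max_above:
  fixes a :: "nat \<Rightarrow> real"
  assumes "filterlim a at_top sequentially"
  shows "\<exists>J. B \<le> a J \<and> (\<forall>i\<le>J. a i \<le> a J)"
proof -
  obtain N where "B \<le> a N"
    using assms by (auto simp: filterlim_at_top eventually_sequentially)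
  have "Max (a ` {..N}) \<in> a ` {..N}" by (rule Max_in) auto
  then obtain J where "J \<le> N" "a J = Max (a ` {..N})" by (metis atMost_iff imageE)
  then have "\<forall>i\<le>N. a i \<le> a J" by simp
  with \<open>B \<le> a N\<close> \<open>J \<le> N\<close> show ?thesis by (intro exI[of _ J]) auto
qed

lemma multiple_between:
  fixes q :: nat and c :: real
  assumes "0 < q" and "0 < c"
  shows "\<exists>q'. q dvd q' \<and> 0 < q' \<and> c \<le> real q' \<and> real q' \<le> c + real q"
proof -
  define k where "k = \<lceil>c / q\<rceil>"
  have "c / q \<le> k" "k \<le> c / q + 1" "0 < k"
    using assms of_int_ceiling_le_add_one[of "c / q"] by (auto simp: k_def)
  then have "c \<le> q * k" "q * k \<le> c + q"
    using assms by (simp_all add: field_simps)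
  with \<open>0 < k\<close> \<open>0 < q\<close> show ?thesis
    by (intro exI[of _ "q * nat k"]) auto
qed

locale peak_staging =
  fixes a :: "nat \<Rightarrow> real" and \<gamma> :: real and s Q :: "nat \<Rightarrow> nat"
  assumes gamma_pos: "0 < \<gamma>"
    and s_0: "s 0 = 0" and s_mono: "strict_mono s"
    and Q_0: "Q 0 = 1" and Q_pos: "0 < Q m" and Q_dvd_Suc: "Q m dvd Q (Suc m)"
    and peak: "i \<le> s (Suc m) \<Longrightarrow> a i \<le> a (s (Suc m))"
    and early_small: "i \<le> s m + m + 1 \<Longrightarrow> 2 * a i \<le> a (s (Suc m))"
    and peak_large: "real (m + 1) * \<gamma> * real (Q m) \<le> a (s (Suc m))"
    and Q_lower: "a (s (Suc m)) \<le> \<gamma> * real (Q (Suc m))"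
    and Q_upper: "\<gamma> * real (Q (Suc m)) \<le> a (s (Suc m)) + \<gamma> * real (Q m)"
begin

definition stage :: "nat \<Rightarrow> nat" where
  "stage j = (LEAST m. j \<le> s m)"

lemma le_s_stage: "j \<le> s (stage j)"
  unfolding stage_def by (rule LeastI[of _ j]) (rule strict_mono_imp_increasing[OF s_mono])

lemma stage_le: "j \<le> s m \<Longrightarrow> stage j \<le> m"
  unfolding stage_def by (rule Least_le)

lemma stage_mono: "i \<le> j \<Longrightarrow> stage i \<le> stage j"
  using le_s_stage[of j] by (intro stage_le) simp

lemma stage_eq:
  assumes "s m < j" "j \<le> s (Suc m)"
  shows "stage j = Suc m"
proof -
  have "\<not> stage j \<le> m"
  proof
    assume "stage j \<le> m"
    then have "j \<le> s m"
      using le_s_stage[of j] strict_mono_less_eq[OF s_mono] by (meson le_trans)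
    with assms(1) show False by simp
  qed
  with stage_le[OF assms(2)] show ?thesis by simp
qed

lemma stage_block:
  assumes "0 < j"
  obtains m where "stage j = Suc m" "s m < j" "j \<le> s (Suc m)"
proof -
  obtain m where m: "stage j = Suc m"
    using le_s_stage[of j] assms s_0 by (cases "stage j") auto
  moreover have "\<not> j \<le> s m"
    using stage_le[of j m] m by auto
  ultimately show ?thesis
    using le_s_stage[of j] that by auto
qed

lemma stage_tendsto: "filterlim stage at_top sequentially"
  unfolding filterlim_at_top eventually_sequentially
proof (intro allI exI impI)
  fix M j assume "Suc (s M) \<le> j"
  then have "s M < s (stage j)"
    using le_s_stage[of j] by linarith
  then show "M \<le> stage j"
    using strict_mono_less[OF s_mono] by simp
qed

definition prods :: "nat \<Rightarrow> nat" where
  "prods j = Q (stage j)"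

definition factor :: "nat \<Rightarrow> nat" where
  "factor j = prods (Suc j) div prods j"

definition denom :: "nat \<Rightarrow> real" where
  "denom j = (\<Sum>i = 1..j. 2 ^ i * real (prods i))"

lemma Q_dvd: "m \<le> n \<Longrightarrow> Q m dvd Q n"
  by (rule transitive_stepwise_le[where R = "\<lambda>m n. Q m dvd Q n"])
    (auto intro: Q_dvd_Suc dvd_trans)

lemma prods_pos: "0 < prods j"
  by (simp add: prods_def Q_pos)

lemma prods_dvd: "i \<le> j \<Longrightarrow> prods i dvd prods j"
  unfolding prods_def by (intro Q_dvd stage_mono)

lemma prods_mono: "i \<le> j \<Longrightarrow> prods i \<le> prods j"
  using prods_dvd prods_pos by (simp add: dvd_imp_le)

lemma prods_block: "s m < j \<Longrightarrow> j \<le> s (Suc m) \<Longrightarrow> prods j = Q (Suc m)"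
  by (simp add: prods_def stage_eq)

lemma factor_pos: "0 < factor j"
  using prods_mono[of j "Suc j"] prods_pos[of j] by (simp add: factor_def div_greater_zero_iff)

lemma prod_factor: "(\<Prod>i<j. real (factor i)) = real (prods j)"
proof (induction j)
  case 0
  have "stage 0 = 0" using stage_le[of 0 0] by simp
  then show ?case by (simp add: prods_def Q_0)
next
  case (Suc j)
  have "prods j * factor j = prods (Suc j)"
    unfolding factor_def using prods_dvd[of j "Suc j"] by simp
  then show ?case using Suc.IH by (simp flip: of_nat_mult)
qed

lemma denom_le: "denom j \<le> 2 ^ (j + 1) * real (prods j)"
proof -
  have "denom j = (\<Sum>i\<in>{0<..j}. 2 ^ i * real (prods i))"
    by (simp add: denom_def flip: atLeastSucAtMost_greaterThanAtMost)
  also have "\<dots> \<le> (\<Sum>i\<in>{0<..j}. 2 ^ i * real (prods j))"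
    by (intro sum_mono mult_left_mono) (auto intro: prods_mono)
  also have "\<dots> = (2 ^ (j + 1) - 2) * real (prods j)"
    unfolding sum_distrib_right[symmetric] by (simp add: sum_power2_greaterThanAtMost)
  also have "\<dots> \<le> 2 ^ (j + 1) * real (prods j)"
    by (intro mult_right_mono) simp_all
  finally show ?thesis .
qed

lemma denom_ge:
  assumes "s m < j" "j \<le> s (Suc m)"
  shows "real (Q (Suc m)) * (2 ^ (j + 1) - 2 ^ (s m + 1)) \<le> denom j"
proof -
  have "real (Q (Suc m)) * (2 ^ (j + 1) - 2 ^ (s m + 1)) = (\<Sum>i\<in>{s m<..j}. 2 ^ i * real (Q (Suc m)))"
    unfolding sum_distrib_right[symmetric] using assms by (simp add: sum_power2_greaterThanAtMost)
  also have "\<dots> = (\<Sum>i\<in>{s m<..j}. 2 ^ i * real (prods i))"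
    using assms by (intro sum.cong) (auto simp: prods_block)
  also have "\<dots> \<le> denom j"
    unfolding denom_def by (intro sum_mono2) auto
  finally show ?thesis .
qed

lemma block_quotient_upper:
  assumes "s m < j" "j \<le> s (Suc m)"
  shows "2 ^ (j + 1) * a j \<le> \<gamma> * (real m + 2) / (real m + 1) * denom j"
proof -
  define QQ where "QQ = real (Q (Suc m))"
  define G :: real where "G = 2 ^ (j + 1) - 2 ^ (s m + 1)"
  have aj: "a j \<le> \<gamma> * QQ"
    using peak[OF assms(2)] Q_lower[of m] by (simp add: QQ_def)
  have QQ_nonneg: "0 \<le> \<gamma> * QQ"
    using gamma_pos by (simp add: QQ_def)
  have "2 ^ (s m + 1) \<le> (2::real) ^ j"
    using assms(1) by (intro power_increasing) auto
  then have G_ge: "2 ^ j \<le> G"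
    by (simp add: G_def)
  have "2 ^ (j + 1) * a j * (real m + 1) \<le> \<gamma> * QQ * G * (real m + 2)"
  proof (cases "j \<le> s m + m + 1")
    case True
    have "2 ^ (j + 1) * a j = 2 ^ j * (2 * a j)"
      by simp
    also have "\<dots> \<le> 2 ^ j * (\<gamma> * QQ)"
      using early_small[OF True] Q_lower[of m] by (intro mult_left_mono) (auto simp: QQ_def)
    also have "\<dots> \<le> G * (\<gamma> * QQ)"
      using G_ge QQ_nonneg by (rule mult_right_mono)
    finally have le: "2 ^ (j + 1) * a j \<le> \<gamma> * QQ * G"
      by (simp add: mult_ac)
    have "0 \<le> \<gamma> * QQ * G"
      using QQ_nonneg order.trans[OF _ G_ge] by simp
    then show ?thesis
      using mult_mono[OF le, of "real m + 1" "real m + 2"] by simp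
  next
    case False
    have "2 ^ (j + 1) * a j * (real m + 1) = (2 ^ (j + 1) * (real m + 1)) * a j"
      by (simp add: mult_ac)
    also have "\<dots> \<le> (2 ^ (j + 1) * (real m + 1)) * (\<gamma> * QQ)"
      using aj by (intro mult_left_mono) simp_all
    also have "\<dots> \<le> G * (real m + 2) * (\<gamma> * QQ)"
      using pow2_diff_lower_bound[of "s m" m j] False QQ_nonneg
      by (intro mult_right_mono) (auto simp: G_def)
    finally show ?thesis
      by (simp add: algebra_simps)
  qed
  also have "\<dots> = \<gamma> * (real m + 2) * (QQ * G)"
    by (simp add: mult_ac)
  also have "\<dots> \<le> \<gamma> * (real m + 2) * denom j"
    using denom_ge[OF assms] gamma_pos by (intro mult_left_mono) (simp_all add: QQ_def G_def)
  finally show ?thesis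
    by (simp add: field_simps)
qed

lemma block_end_quotient_lower:
  "\<gamma> * (real m + 1) / (real m + 2) * denom (s (Suc m)) \<le> 2 ^ (s (Suc m) + 1) * a (s (Suc m))"
proof -
  define J where "J = s (Suc m)"
  define QQ where "QQ = real (Q (Suc m))"
  have "\<gamma> * QQ * (real m + 1) \<le> (a J + \<gamma> * Q m) * (real m + 1)"
    using Q_upper[of m] by (intro mult_right_mono) (simp_all add: QQ_def J_def)
  also have "\<dots> \<le> a J * (real m + 2)"
    using peak_large[of m] by (simp add: J_def algebra_simps)
  finally have QQ_le: "\<gamma> * QQ * (real m + 1) \<le> a J * (real m + 2)" .
  have "\<gamma> * (real m + 1) * denom J \<le> \<gamma> * (real m + 1) * (2 ^ (J + 1) * QQ)"
    using denom_le[of J] prods_block[of m J] s_mono gamma_pos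
    by (intro mult_left_mono) (simp_all add: J_def QQ_def strict_mono_Suc_iff)
  also have "\<dots> = 2 ^ (J + 1) * (\<gamma> * QQ * (real m + 1))"
    by (simp add: algebra_simps)
  also have "\<dots> \<le> 2 ^ (J + 1) * (a J * (real m + 2))"
    using QQ_le by (intro mult_left_mono) simp_all
  finally show ?thesis
    by (simp add: J_def field_simps)
qed

lemma denom_pos: "0 < j \<Longrightarrow> 0 < denom j"
  unfolding denom_def using prods_pos by (intro sum_pos) auto

lemma limsup_quotient:
  "limsup (\<lambda>n. ereal (2 ^ (n + 1) * a n / (\<Sum>i = 1..n. 2 ^ i * (\<Prod>j<i. real (factor j)))))
     = ereal \<gamma>"
proof -
  define x where "x n = 2 ^ (n + 1) * a n / denom n" for n
  have upper: "x j \<le> \<gamma> + \<gamma> / real (stage j)" if j_pos: "0 < j" for j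
  proof -
    obtain m where "stage j = Suc m" "s m < j" "j \<le> s (Suc m)"
      using stage_block[OF j_pos] by blast
    moreover have "2 ^ (j + 1) * a j \<le> \<gamma> * (real m + 2) / (real m + 1) * denom j"
      using block_quotient_upper calculation(2,3) .
    ultimately show ?thesis
      using denom_pos[OF j_pos] by (simp add: x_def divide_le_eq field_simps)
  qed
  have lower: "\<gamma> - \<gamma> / real (m + 2) \<le> x (s (Suc m))" for m
  proof -
    have "0 < s (Suc m)"
      using strict_mono_less[OF s_mono, of 0 "Suc m"] s_0 by simp
    with block_end_quotient_lower[of m] show ?thesis
      using denom_pos by (simp add: x_def le_divide_eq field_simps)
  qed
  have "(\<lambda>j. \<gamma> + \<gamma> / real (stage j)) \<longlonglongrightarrow> \<gamma> + 0"
    by (intro tendsto_add tendsto_const filterlim_compose[OF lim_const_over_n stage_tendsto])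
  moreover have "(\<lambda>m. \<gamma> - \<gamma> / real (m + 2)) \<longlonglongrightarrow> \<gamma> - 0"
    by (intro tendsto_diff tendsto_const LIMSEQ_ignore_initial_segment[OF lim_const_over_n])
  moreover have "strict_mono (\<lambda>m. s (Suc m))"
    using s_mono by (simp add: strict_mono_Suc_iff)
  moreover have "eventually (\<lambda>j. x j \<le> \<gamma> + \<gamma> / real (stage j)) sequentially"
    using upper eventually_gt_at_top[of 0] by (rule eventually_mono[rotated])
  ultimately have "limsup (\<lambda>n. ereal (x n)) = ereal \<gamma>"
    using limsup_eq_of_bounds[of x _ \<gamma> "\<lambda>m. s (Suc m)" "\<lambda>m. \<gamma> - \<gamma> / real (m + 2)"] lower
    by simp
  then show ?thesis
    by (simp add: x_def denom_def prod_factor)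
qed

end

lemma next_stage_exists:
  fixes a :: "nat \<Rightarrow> real" and s m q :: nat
  assumes "filterlim a at_top sequentially" and "0 < \<gamma>" and "0 < q"
  shows "\<exists>J q'. s < J \<and> (\<forall>i\<le>J. a i \<le> a J) \<and> (\<forall>i\<le>s + m + 1. 2 * a i \<le> a J) \<and>
    real (m + 1) * \<gamma> * real q \<le> a J \<and> q dvd q' \<and> 0 < q' \<and>
    a J \<le> \<gamma> * real q' \<and> \<gamma> * real q' \<le> a J + \<gamma> * real q"
proof -
  define B where "B = max (2 * Max (a ` {..s + m + 1})) (real (m + 1) * \<gamma> * real q) + 1"
  obtain J where J: "B \<le> a J" "\<forall>i\<le>J. a i \<le> a J"
    using running_max_above[OF assms(1)] by blast
  have "0 \<le> real (m + 1) * \<gamma> * real q"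
    using assms(2) by simp
  then have aJ_large: "real (m + 1) * \<gamma> * real q < a J" "0 < a J"
    using J(1) by (auto simp: B_def)
  have early: "2 * a i < a J" if "i \<le> s + m + 1" for i
  proof -
    have "a i \<le> Max (a ` {..s + m + 1})"
      using that by (intro Max_ge) auto
    then show ?thesis
      using J(1) by (simp add: B_def)
  qed
  have "s < J"
    using early[of J] aJ_large(2) by (cases "s < J") auto
  obtain q' where q': "q dvd q'" "0 < q'" "a J / \<gamma> \<le> real q'" "real q' \<le> a J / \<gamma> + q"
    using multiple_between[OF assms(3), of "a J / \<gamma>"] aJ_large(2) assms(2) by auto
  then have "a J \<le> \<gamma> * real q'" "\<gamma> * real q' \<le> a J + \<gamma> * real q"
    using assms(2) by (simp_all add: field_simps)
  with \<open>s < J\<close> J(2) early aJ_large(1) q'(1,2) show ?thesis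
    by (intro exI[of _ J] exI[of _ q']) (auto intro: less_imp_le)
qed

lemma peak_staging_exists:
  fixes a :: "nat \<Rightarrow> real"
  assumes "filterlim a at_top sequentially" and "0 < \<gamma>"
  obtains s Q where "peak_staging a \<gamma> s Q"
proof -
  define P where "P n x \<longleftrightarrow> 0 < snd x \<and> (n = 0 \<longrightarrow> x = (0, 1))" for n :: nat and x :: "nat \<times> nat"
  define R where "R m x y \<longleftrightarrow> fst x < fst y \<and> (\<forall>i\<le>fst y. a i \<le> a (fst y)) \<and>
      (\<forall>i\<le>fst x + m + 1. 2 * a i \<le> a (fst y)) \<and> real (m + 1) * \<gamma> * real (snd x) \<le> a (fst y) \<and>
      snd x dvd snd y \<and> 0 < snd y \<and> a (fst y) \<le> \<gamma> * real (snd y) \<and>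
      \<gamma> * real (snd y) \<le> a (fst y) + \<gamma> * real (snd x)"
    for m :: nat and x y :: "nat \<times> nat"
  have "\<exists>y. P (Suc m) y \<and> R m x y" if "P m x" for m x
    using next_stage_exists[OF assms, of "snd x" "fst x" m] that
    by (auto simp: P_def R_def)
  then obtain f where f: "\<And>m. P m (f m) \<and> R m (f m) (f (Suc m))"
    using dependent_nat_choice[of P R] by (auto simp: P_def)
  have "peak_staging a \<gamma> (\<lambda>m. fst (f m)) (\<lambda>m. snd (f m))"
    using f assms(2) by unfold_locales (auto simp: P_def R_def strict_mono_Suc_iff)
  then show ?thesis ..
qed

theorem mainTheorem13:
  fixes a :: "nat \<Rightarrow> real" and \<gamma> :: real
  assumes "filterlim a at_top sequentially"
    and "\<gamma> > 0"
  shows "\<exists>r :: nat \<Rightarrow> nat. (\<forall>n. r n > 0) \<and>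
    limsup (\<lambda>n. ereal (2 ^ (n + 1) * a n /
        (\<Sum>i = 1..n. 2 ^ i * (\<Prod>j < i. real (r j))))) = ereal \<gamma>"
proof -
  obtain s Q where "peak_staging a \<gamma> s Q"
    using peak_staging_exists[OF assms] .
  then interpret peak_staging a \<gamma> s Q .
  show ?thesis
    using factor_pos limsup_quotient by blast
qed

end
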